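(* Let $m$ be a non-negative integer. Then there is at most one tuple of complex numbers $(c_0,c_2,c_4,\dots,c_{2m})$ such that, identically as meromorphic functions of $s\in\mathbb{C}$, $$\zeta(-2m-1,s+2m+1)+c_{2m}\zeta(-2m,s+2m)+c_{2m-2}\zeta(-2m+2,s+2m-2)+\cdots+c_2\zeta(-2,s+2)+c_0\,\zeta(0,s)/2\equiv0;$$ that is, if such coefficients exist, they are uniquely determined.
   Context: For an integer $c\ge 0$, $\zeta(-c,s+c)$ denotes the Euler–Zagier double zeta function $\zeta(s_1,s_2)=\sum_{1\le n_1<n_2} n_1^{-s_1}n_2^{-s_2}$ evaluated at $(s_1,s_2)=(-c,s+c)$; i.e. it is the meromorphic continuation to all $s\in\mathbb{C}$ of the series $\sum_{m,n\ge1} m^{c}(m+n)^{-s-c}$, which converges absolutely for $\Re(s)>2$. *)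

theory Defs
  imports "HOL-Complex_Analysis.Complex_Analysis"
begin

text \<open>The defining series of the Euler--Zagier double zeta function at
  (s1,s2) = (-c, s+c):  sum over m,n >= 1 of m^c (m+n)^(-s-c).
  It converges absolutely for Re s > 2.\<close>
definition dz_series :: "nat \<Rightarrow> complex \<Rightarrow> complex" where
  "dz_series c s =
     infsum (\<lambda>(a::nat, b::nat). (of_nat a) ^ c * (of_nat (a + b)) powr (- s - of_nat c))
            ({1..} \<times> {1..})"

definition is_dz_continuation :: "nat \<Rightarrow> (complex \<Rightarrow> complex) \<Rightarrow> bool" where
  "is_dz_continuation c F \<longleftrightarrow>
     F meromorphic_on UNIV \<and> (\<forall>s. 2 < Re s \<longrightarrow> F s = dz_series c s)"

definition dz_comb :: "nat \<Rightarrow> (nat \<Rightarrow> complex) \<Rightarrow> (nat \<Rightarrow> complex \<Rightarrow> complex) \<Rightarrow> complex \<Rightarrow> complex" where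
  "dz_comb m coef F s =
     F (2*m+1) s + (\<Sum>j=1..m. coef (2*j) * F (2*j) s) + coef 0 * F 0 s / 2"

end

(*
  Subtracting the two relations cancels the odd term and leaves \<Sum>j\<le>m. d_j zeta(-2j, s+2j) = 0
  off a sparse set, where d_j = c_2j - c'_2j except that d_0 carries the factor 1/2.  In
  particular this holds at real points t of every interval [T, T+1].  Grouping the double series
  by N = a + b turns the combination into a Dirichlet series \<Sum>N G(N) N^(-t) with
  G(N) = \<Sum>0<a<N. p(a/N), p(x) = \<Sum>j d_j x^(2j), and a Dirichlet series vanishing at points
  t -> \<infinity> has vanishing coefficients.  By Faulhaber's formula N^(2m) G(N) is a polynomial in N
  whose linear coefficient is d_m B_2m; even Bernoulli numbers are nonzero (twice B_2k is a
  quotient of odd integers), so G = 0 forces d_m = 0, and induction on m gives d = 0.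
*)
theory Submission
  imports Defs "HOL-Computational_Algebra.Polynomial"
begin

lemma sum_atMost_odd_if_even:
  fixes g :: "nat \<Rightarrow> 'a::comm_monoid_add"
  shows "(\<Sum>i\<le>2*k+1. if even i then g i else 0) = (\<Sum>j\<le>k. g (2*j))"
  by (induction k) (simp_all add: atMost_Suc)

lemma power_odd_plus_minus_one_diff:
  fixes x :: "'a::comm_ring_1"
  shows "(x + 1) ^ (2*k+1) - (x - 1) ^ (2*k+1)
           = 2 * (\<Sum>j\<le>k. of_nat ((2*k+1) choose (2*j)) * x ^ (2*j))"
proof -
  let ?n = "2*k+1"
  have "(x + 1) ^ ?n - (x - 1) ^ ?n = (\<Sum>i\<le>?n. of_nat (?n choose i) * x ^ i * (1 - (-1) ^ (?n - i)))"
    using binomial_ring[of x 1 ?n] binomial_ring[of x "-1" ?n]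
    by (simp add: sum_subtractf right_diff_distrib)
  also have "\<dots> = (\<Sum>i\<le>?n. if even i then 2 * (of_nat (?n choose i) * x ^ i) else 0)"
  proof (intro sum.cong refl)
    fix i assume "i \<in> {..?n}"
    then have "even i \<longleftrightarrow> odd (?n - i)" by auto
    then show "of_nat (?n choose i) * x ^ i * (1 - (-1) ^ (?n - i))
        = (if even i then 2 * (of_nat (?n choose i) * x ^ i) else 0)"
      by (auto simp: mult_2_right)
  qed
  also have "\<dots> = 2 * (\<Sum>j\<le>k. of_nat (?n choose (2*j)) * x ^ (2*j))"
    by (subst sum_atMost_odd_if_even) (simp add: sum_distrib_left)
  finally show ?thesis .
qed

lemma sum_power_odd_plus_minus_one_diff:
  "(\<Sum>a<N. (of_nat a + 1) ^ (2*k+1) - (of_nat a - 1) ^ (2*k+1))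
     = (of_nat N) ^ (2*k+1) + (of_nat N - 1) ^ (2*k+1) + (1 :: 'a::comm_ring_1)"
proof -
  let ?n = "2*k+1"
  have "(\<Sum>a<N. (of_nat a + 1) ^ ?n - (of_nat a - 1) ^ ?n)
      = (\<Sum>a<N. (of_nat (Suc a)) ^ ?n - of_nat a ^ ?n)
        + (\<Sum>a<N. (of_nat (Suc a) - 1) ^ ?n - (of_nat a - 1) ^ ?n :: 'a)"
    by (simp add: sum.distrib[symmetric] algebra_simps)
  also have "\<dots> = of_nat N ^ ?n + ((of_nat N - 1) ^ ?n + 1)"
    using sum_lessThan_telescope[of "\<lambda>a. (of_nat a :: 'a) ^ ?n" N]
      sum_lessThan_telescope[of "\<lambda>a. (of_nat a - 1 :: 'a) ^ ?n" N] by simp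
  finally show ?thesis by (simp add: add.assoc)
qed

(* Faulhaber's polynomial for \<Sum>a<N. a^(2k): telescoping power_odd_plus_minus_one_diff over a < N
   gives 2 \<Sum>j\<le>k. C(2k+1,2j) S_j(N) = N^(2k+1) + (N-1)^(2k+1) + 1, solved here for S_k. *)
fun even_power_sum_poly :: "nat \<Rightarrow> 'a::field_char_0 poly" where
  "even_power_sum_poly k = smult (1 / (2 * (2 * of_nat k + 1)))
     ([:0,1:] ^ (2*k+1) + [:-1,1:] ^ (2*k+1) + 1
      - smult 2 (\<Sum>j<k. smult (of_nat ((2*k+1) choose (2*j))) (even_power_sum_poly j)))"

declare even_power_sum_poly.simps [simp del]

lemma double_odd_of_nat_neq_0: "(2 * (2 * of_nat k + 1) :: 'a::field_char_0) \<noteq> 0"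
  using of_nat_neq_0[of "4*k+1", where 'a='a] by (simp add: algebra_simps)

lemma poly_even_power_sum_poly:
  "poly (even_power_sum_poly k) (of_nat N) = (\<Sum>a<N. (of_nat a :: 'a::field_char_0) ^ (2*k))"
proof (induction k rule: less_induct)
  case (less k)
  define S where "S j = (\<Sum>a<N. (of_nat a :: 'a) ^ (2*j))" for j
  define C where "C j = (of_nat ((2*k+1) choose (2*j)) :: 'a)" for j
  have "(\<Sum>j\<le>k. C j * S j) = (\<Sum>a<N. \<Sum>j\<le>k. C j * of_nat a ^ (2*j))"
    unfolding S_def sum_distrib_left by (rule sum.swap)
  then have "2 * (\<Sum>j\<le>k. C j * S j) = (\<Sum>a<N. (of_nat a + 1) ^ (2*k+1) - (of_nat a - 1) ^ (2*k+1))"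
    by (simp only: C_def power_odd_plus_minus_one_diff sum_distrib_left)
  also have "\<dots> = of_nat N ^ (2*k+1) + (of_nat N - 1) ^ (2*k+1) + 1"
    by (rule sum_power_odd_plus_minus_one_diff)
  finally have "2 * (2 * of_nat k + 1) * S k
      = of_nat N ^ (2*k+1) + (of_nat N - 1) ^ (2*k+1) + 1 - 2 * (\<Sum>j<k. C j * S j)"
    by (simp add: C_def lessThan_Suc_atMost[symmetric] algebra_simps)
  moreover note double_odd_of_nat_neq_0[of k, where 'a='a]
  moreover have "poly (even_power_sum_poly k) (of_nat N)
      = (of_nat N ^ (2*k+1) + (of_nat N - 1) ^ (2*k+1) + 1 - 2 * (\<Sum>j<k. C j * S j))
        / (2 * (2 * of_nat k + 1))"
    using less.IH by (subst even_power_sum_poly.simps) (simp add: poly_sum S_def C_def left_diff_distrib)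
  ultimately have "poly (even_power_sum_poly k) (of_nat N) = S k"
    by (metis nonzero_mult_div_cancel_left)
  then show ?case by (simp add: S_def)
qed

definition bernoulli_even :: "nat \<Rightarrow> 'a::field_char_0" where
  "bernoulli_even k = coeff (even_power_sum_poly k) 1"

lemma coeff_1_eq_poly_pderiv_0: "coeff p 1 = poly (pderiv p) 0"
  by (simp add: poly_0_coeff_0 coeff_pderiv)

lemma bernoulli_even_recurrence:
  "2 * (\<Sum>j\<le>k. of_nat ((2*k+1) choose (2*j)) * bernoulli_even j)
     = 2 * of_nat k + 1 + (if k = 0 then 1 else (0 :: 'a::field_char_0))"
proof -
  have c0: "coeff ([:0,1:] ^ (2*k+1) :: 'a poly) 1 = (if k = 0 then 1 else 0)"
    and c1: "coeff ([:-1,1:] ^ (2*k+1) :: 'a poly) 1 = 2 * of_nat k + 1"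
    unfolding coeff_1_eq_poly_pderiv_0 Suc_eq_plus1[symmetric] pderiv_power_Suc
    by (simp_all add: pderiv_pCons)
  have "bernoulli_even k = 1 / (2 * (2 * of_nat k + 1)) * (2 * of_nat k + 1 + (if k = 0 then 1 else 0)
      - 2 * (\<Sum>j<k. of_nat ((2*k+1) choose (2*j)) * bernoulli_even j) :: 'a)"
    unfolding bernoulli_even_def
    by (subst even_power_sum_poly.simps) (simp only: coeff_smult coeff_add coeff_diff coeff_sum c0 c1, simp)
  moreover note double_odd_of_nat_neq_0[of k, where 'a='a]
  ultimately show ?thesis
    by (simp add: lessThan_Suc_atMost[symmetric] field_simps)
qed

lemma bernoulli_even_0 [simp]: "bernoulli_even 0 = 1"
  using bernoulli_even_recurrence[of 0] by simp

lemma bernoulli_even_recurrence_doubled: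
  assumes "k \<ge> 1"
  shows "(2 * of_nat k + 1) * (2 * bernoulli_even k)
     = 2 * of_nat k - 1
       - (\<Sum>j\<in>{1..<k}. of_nat ((2*k+1) choose (2*j)) * (2 * bernoulli_even j) :: 'a::field_char_0)"
proof -
  have "{..k} = insert 0 (insert k {1..<k})" using assms by auto
  then show ?thesis
    using bernoulli_even_recurrence[of k, where 'a='a] assms
    by (simp add: sum_distrib_left algebra_simps)
qed

lemma even_sum_middle_even_binomials: "even (\<Sum>j\<in>{1..<k}. (2*k+1) choose (2*j))"
proof (cases "k = 0")
  case False
  have "2 * (\<Sum>i\<le>2*k+1. if even i then int ((2*k+1) choose i) else 0) = 2 ^ (2*k+1)"
    by (rule choose_even_sum) simp
  then have "int (\<Sum>j\<le>k. (2*k+1) choose (2*j)) = int (2 ^ (2*k))"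
    by (subst (asm) sum_atMost_odd_if_even) simp
  then have "(\<Sum>j\<le>k. (2*k+1) choose (2*j)) = 2 ^ (2*k)"
    by (simp only: of_nat_eq_iff)
  moreover have "{..k} = insert 0 (insert k {1..<k})" using False by auto
  ultimately have "(\<Sum>j\<in>{1..<k}. (2*k+1) choose (2*j)) + 2 * k + 2 = 2 ^ (2*k)"
    using False by simp
  then have "even ((\<Sum>j\<in>{1..<k}. (2*k+1) choose (2*j)) + 2 * (k + 1))"
    using False by (simp add: algebra_simps)
  then show ?thesis by simp
qed simp

(* 2-adic argument: the middle binomial coefficients have even sum, so multiplying the recurrence
   by a common odd denominator keeps the numerators of the 2 B_2j odd. *)
lemma odd_multiple_of_bernoulli_even_Suc:
  fixes L :: int and n :: "nat \<Rightarrow> int"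
  assumes "odd L"
    and n: "\<And>j. j \<in> {1..k} \<Longrightarrow>
              odd (n j) \<and> of_int L * (2 * bernoulli_even j) = (of_int (n j) :: 'a::field_char_0)"
  shows "\<exists>n'. odd n' \<and>
           of_int (L * (2 * int (Suc k) + 1)) * (2 * bernoulli_even (Suc k)) = (of_int n' :: 'a)"
proof -
  define C where "C j = (2 * Suc k + 1) choose (2 * j)" for j
  define n' where "n' = L * (2 * int (Suc k) - 1) - (\<Sum>j\<in>{1..k}. int (C j) * n j)"
  have "(2 * of_nat (Suc k) + 1) * (2 * bernoulli_even (Suc k))
      = 2 * of_nat (Suc k) - 1 - (\<Sum>j\<in>{1..k}. of_nat (C j) * (2 * bernoulli_even j) :: 'a)"
    using bernoulli_even_recurrence_doubled[of "Suc k", where 'a='a]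
    by (simp add: C_def atLeastLessThanSuc_atLeastAtMost)
  then have "of_int L * ((2 * of_nat (Suc k) + 1) * (2 * bernoulli_even (Suc k)))
      = of_int L * (2 * of_nat (Suc k) - 1)
        - (\<Sum>j\<in>{1..k}. of_nat (C j) * (of_int L * (2 * bernoulli_even j)) :: 'a)"
    by (simp add: sum_distrib_left right_diff_distrib mult.left_commute)
  also have "\<dots> = of_int n'"
    using n by (simp add: n'_def)
  finally have numerator:
      "of_int (L * (2 * int (Suc k) + 1)) * (2 * bernoulli_even (Suc k)) = (of_int n' :: 'a)"
    by (simp add: algebra_simps)
  have "(\<Sum>j\<in>{1..k}. int (C j) * n j)
      = (\<Sum>j\<in>{1..k}. int (C j) * (n j - 1)) + (\<Sum>j\<in>{1..k}. int (C j))"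
    by (simp add: sum.distrib[symmetric] algebra_simps)
  moreover have "even (\<Sum>j\<in>{1..k}. int (C j) * (n j - 1))"
    using n by (intro dvd_sum) auto
  moreover have "even (\<Sum>j\<in>{1..k}. int (C j))"
    using even_sum_middle_even_binomials[of "Suc k"] unfolding C_def
    by (simp add: atLeastLessThanSuc_atLeastAtMost flip: of_nat_sum)
  ultimately have "odd n'"
    using \<open>odd L\<close> unfolding n'_def by simp
  with numerator show ?thesis
    by blast
qed

lemma odd_multiple_of_bernoulli_even:
  "\<forall>j\<in>{1..k}. \<exists>n::int. odd n \<and>
     of_int (\<Prod>i=1..k. 2 * int i + 1) * (2 * bernoulli_even j) = (of_int n :: 'a::field_char_0)"
proof (induction k)
  case (Suc k)
  define L where "L = (\<Prod>i=1..k. 2 * int i + 1)"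
  have L_Suc: "(\<Prod>i=1..Suc k. 2 * int i + 1) = L * (2 * int (Suc k) + 1)"
    unfolding L_def by (simp add: prod.nat_ivl_Suc')
  have "odd L"
    unfolding L_def by (induction k) auto
  obtain n where n: "\<And>j. j \<in> {1..k} \<Longrightarrow>
      odd (n j) \<and> of_int L * (2 * bernoulli_even j) = (of_int (n j) :: 'a)"
    using Suc.IH unfolding L_def by metis
  have "\<exists>n'. odd n' \<and> of_int (L * (2 * int (Suc k) + 1)) * (2 * bernoulli_even j) = (of_int n' :: 'a)"
    if "j \<in> {1..k}" for j
  proof -
    have "of_int (L * (2 * int (Suc k) + 1)) * (2 * bernoulli_even j)
        = (of_int L * (2 * bernoulli_even j)) * (of_int (2 * int (Suc k) + 1) :: 'a)"
      by (simp only: of_int_mult ac_simps)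
    also have "\<dots> = of_int (n j * (2 * int (Suc k) + 1))"
      using n[OF that] by simp
    finally show ?thesis
      using n[OF that] by (intro exI[of _ "n j * (2 * int (Suc k) + 1)"]) simp
  qed
  with odd_multiple_of_bernoulli_even_Suc[OF \<open>odd L\<close> n] show ?case
    unfolding L_Suc by (auto simp: le_Suc_eq)
qed simp

lemma bernoulli_even_neq_0: "bernoulli_even k \<noteq> (0 :: 'a::field_char_0)"
proof (cases "k = 0")
  case False
  then have "k \<in> {1..k}" by simp
  then obtain n :: int where "odd n"
    and "of_int (\<Prod>i=1..k. 2 * int i + 1) * (2 * bernoulli_even k) = (of_int n :: 'a)"
    using odd_multiple_of_bernoulli_even[of k, where 'a='a] by blast
  then show ?thesis by auto
qed simp

(* G(N) of the header: the N-th Dirichlet coefficient of \<Sum>j\<le>m. d_j zeta(-2j, s+2j). *)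
definition even_poly_grid_sum :: "(nat \<Rightarrow> 'a::field) \<Rightarrow> nat \<Rightarrow> nat \<Rightarrow> 'a" where
  "even_poly_grid_sum d m N = (\<Sum>a\<in>{1..<N}. \<Sum>j\<le>m. d j * (of_nat a / of_nat N) ^ (2*j))"

lemma poly_eq_0_if_zero_at_large_nats:
  fixes p :: "'a::{idom,ring_char_0} poly"
  assumes "\<And>N. N \<ge> n \<Longrightarrow> poly p (of_nat N) = 0"
  shows "p = 0"
proof (rule ccontr)
  assume "p \<noteq> 0"
  then have "finite {x. poly p x = 0}" by (rule poly_roots_finite)
  moreover have "of_nat ` {n..} \<subseteq> {x. poly p x = 0}" using assms by auto
  ultimately have "finite (of_nat ` {n..} :: 'a set)" by (rule finite_subset[rotated])
  then show False
    using finite_imageD[OF _ inj_on_subset[OF inj_of_nat, of "{n..}"]] infinite_Ici by blast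
qed

(* The monomial cancels the a = 0 terms of the power sums, where 0^0 = 1. *)
lemma poly_even_power_sum_combination:
  fixes d :: "nat \<Rightarrow> 'a::field_char_0"
  assumes "N > 0"
  shows "poly ((\<Sum>j\<le>m. smult (d j) (monom 1 (2*m - 2*j) * even_power_sum_poly j)) - monom (d 0) (2*m))
           (of_nat N)
         = of_nat N ^ (2*m) * even_poly_grid_sum d m N"
proof -
  have N: "(of_nat N :: 'a) \<noteq> 0" using assms by simp
  have "of_nat N ^ (2*m - 2*j) * (\<Sum>a<N. of_nat a ^ (2*j))
      = of_nat N ^ (2*m) * (\<Sum>a<N. (of_nat a / of_nat N :: 'a) ^ (2*j))" if "j \<le> m" for j
  proof -
    have "(of_nat N :: 'a) ^ (2*m) = of_nat N ^ (2*m - 2*j) * of_nat N ^ (2*j)"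
      using that by (simp flip: power_add)
    then show ?thesis using N by (simp add: sum_distrib_left power_divide)
  qed
  then have "poly ((\<Sum>j\<le>m. smult (d j) (monom 1 (2*m - 2*j) * even_power_sum_poly j)) - monom (d 0) (2*m))
           (of_nat N)
      = of_nat N ^ (2*m) * ((\<Sum>a<N. \<Sum>j\<le>m. d j * (of_nat a / of_nat N) ^ (2*j)) - d 0)"
    by (simp add: poly_sum poly_monom poly_even_power_sum_poly sum_distrib_left right_diff_distrib
        sum.swap[of _ "{..<N}"] mult.left_commute)
  also have "(\<Sum>a<N. \<Sum>j\<le>m. d j * (of_nat a / of_nat N) ^ (2*j))
      = (\<Sum>j\<le>m. d j * (0 / of_nat N) ^ (2*j))
        + (\<Sum>a\<in>{1..<N}. \<Sum>j\<le>m. d j * (of_nat a / of_nat N) ^ (2*j))"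
    using assms by (subst lessThan_atLeast0, subst sum.atLeast_Suc_lessThan) simp_all
  also have "(\<Sum>j\<le>m. d j * (0 / of_nat N) ^ (2*j)) = d 0"
    by (induction m) simp_all
  finally show ?thesis
    unfolding even_poly_grid_sum_def by simp
qed

lemma even_poly_grid_sum_eq_0_imp_coeffs_eq_0:
  fixes d :: "nat \<Rightarrow> 'a::field_char_0"
  assumes "\<And>N. N \<ge> 2 \<Longrightarrow> even_poly_grid_sum d m N = 0"
  shows "\<forall>j\<le>m. d j = 0"
  using assms
proof (induction m)
  case 0
  from "0.prems"[of 2] show ?case by (simp add: even_poly_grid_sum_def)
next
  case (Suc m)
  define V where "V = (\<Sum>j\<le>Suc m. smult (d j) (monom 1 (2 * Suc m - 2*j) * even_power_sum_poly j))
                        - monom (d 0) (2 * Suc m)"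
  have "poly V (of_nat N) = 0" if "N \<ge> 2" for N
    using Suc.prems[OF that] that unfolding V_def
    by (subst poly_even_power_sum_combination) simp_all
  then have "V = 0"
    by (rule poly_eq_0_if_zero_at_large_nats)
  moreover have "coeff V 1 = d (Suc m) * bernoulli_even (Suc m)"
    \<comment> \<open>all other summands of V are multiples of x^2\<close>
    by (simp add: V_def coeff_sum coeff_monom coeff_monom_mult bernoulli_even_def, intro sum.neutral) auto
  ultimately have "d (Suc m) = 0"
    using bernoulli_even_neq_0[of "Suc m", where 'a='a] by simp
  then have "\<forall>j\<le>m. d j = 0"
    using Suc.prems by (intro Suc.IH) (simp add: even_poly_grid_sum_def)
  with \<open>d (Suc m) = 0\<close> show ?case
    by (auto simp: le_Suc_eq)
qed

lemma norm_even_poly_grid_sum_le: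
  fixes d :: "nat \<Rightarrow> 'a::real_normed_field"
  shows "norm (even_poly_grid_sum d m N) \<le> (\<Sum>j\<le>m. norm (d j)) * real N"
proof -
  have "norm (\<Sum>j\<le>m. d j * (of_nat a / of_nat N) ^ (2*j)) \<le> (\<Sum>j\<le>m. norm (d j))"
    if "a \<in> {1..<N}" for a
  proof -
    have "norm ((of_nat a / of_nat N :: 'a) ^ (2*j)) \<le> 1" for j
      using that by (simp add: norm_power norm_divide power_le_one)
    then have "norm (d j * (of_nat a / of_nat N) ^ (2*j)) \<le> norm (d j)" for j
      by (simp add: norm_mult mult_left_le)
    then show ?thesis
      by (intro order_trans[OF norm_sum] sum_mono)
  qed
  then have "norm (even_poly_grid_sum d m N) \<le> (\<Sum>a\<in>{1..<N}. \<Sum>j\<le>m. norm (d j))"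
    unfolding even_poly_grid_sum_def by (rule order_trans[OF norm_sum sum_mono]) auto
  also have "\<dots> = real (N - 1) * (\<Sum>j\<le>m. norm (d j))"
    by simp
  also have "\<dots> \<le> (\<Sum>j\<le>m. norm (d j)) * real N"
    by (subst mult.commute) (intro mult_right_mono sum_nonneg, auto)
  finally show ?thesis .
qed

lemma summable_on_norm_even_poly_grid_sum_powr:
  fixes d :: "nat \<Rightarrow> 'a::real_normed_field"
  shows "(\<lambda>N. norm (even_poly_grid_sum d m N) * real N powr (- 3)) summable_on UNIV"
proof (rule summable_on_comparison_test)
  define D where "D = (\<Sum>j\<le>m. norm (d j))"
  have "summable (\<lambda>N. real N powr (- 2))"
    by (subst summable_real_powr_iff) simp
  then show "(\<lambda>N. D * real N powr (- 2)) summable_on UNIV"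
    by (subst summable_on_UNIV_nonneg_real_iff) (auto simp: D_def sum_nonneg intro: summable_mult)
  fix N :: nat
  have "norm (even_poly_grid_sum d m N) * real N powr (- 3) \<le> D * real N * real N powr (- 3)"
    unfolding D_def by (intro mult_right_mono norm_even_poly_grid_sum_le) auto
  also have "\<dots> = D * real N powr (- 2)"
    by (cases "N = 0") (simp_all add: powr_add[of "real N" 1 "- 3", simplified] mult.assoc)
  finally show "norm (even_poly_grid_sum d m N) * real N powr (- 3) \<le> D * real N powr (- 2)" .
qed simp

lemma has_sum_sum:
  fixes f :: "'i \<Rightarrow> 'a \<Rightarrow> 'b::topological_comm_monoid_add"
  assumes "finite J" "\<And>j. j \<in> J \<Longrightarrow> (f j has_sum s j) A"
  shows "((\<lambda>x. \<Sum>j\<in>J. f j x) has_sum (\<Sum>j\<in>J. s j)) A"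
  using assms by (induction J rule: finite_induct) (auto intro: has_sum_add)

lemma summable_on_powr_Sigma_atLeastLessThan:
  fixes \<sigma> :: real
  assumes "\<sigma> > 2"
  shows "(\<lambda>(N, a). real N powr (-\<sigma>)) summable_on (SIGMA N:UNIV. {1..<N::nat})"
proof (rule summable_on_SigmaI)
  show "((\<lambda>a. (\<lambda>(N, a). real N powr (-\<sigma>)) (N, a)) has_sum (real N - 1) * real N powr (-\<sigma>))
          {1..<N}"
    for N :: nat
    by (cases "N = 0") (auto intro!: has_sum_finiteI simp: of_nat_diff)
  have "summable (\<lambda>N. real N powr (1 - \<sigma>))"
    using assms by (subst summable_real_powr_iff) simp
  then have "summable (\<lambda>N::nat. (real N - 1) * real N powr (-\<sigma>))"
  proof (rule summable_comparison_test[rotated], intro exI allI impI)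
    fix N :: nat assume "N \<ge> 1"
    then have "(real N - 1) * real N powr (-\<sigma>) \<le> real N * real N powr (-\<sigma>)"
      by (intro mult_right_mono) auto
    also have "\<dots> = real N powr (1 - \<sigma>)"
      using \<open>N \<ge> 1\<close> by (simp add: powr_diff powr_minus field_simps)
    finally show "norm ((real N - 1) * real N powr (-\<sigma>)) \<le> real N powr (1 - \<sigma>)"
      using \<open>N \<ge> 1\<close> by simp
  qed
  moreover have "(real N - 1) * real N powr (-\<sigma>) \<ge> 0" for N :: nat
    by (cases "N = 0") auto
  ultimately show "(\<lambda>N::nat. (real N - 1) * real N powr (-\<sigma>)) summable_on UNIV"
    by (subst summable_on_UNIV_nonneg_real_iff) auto
qed auto

lemma has_sum_dz_series_grouped:
  assumes "Re s > 2"
  shows "((\<lambda>N. (\<Sum>a\<in>{1..<N}. of_nat a ^ c) * of_nat N powr (- s - of_nat c)) has_sum dz_series c s) UNIV"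
proof -
  define P where "P = (SIGMA N:UNIV. {1..<N::nat})"
  define h where "h = (\<lambda>(N::nat, a::nat). of_nat a ^ c * of_nat N powr (- s - of_nat c) :: complex)"
  have "dz_series c s = infsum h P"
    unfolding dz_series_def h_def P_def
    by (rule infsum_reindex_bij_witness[of _ "\<lambda>(N, a). (a, N - a)" "\<lambda>(a, b). (a + b, a)"])
       (auto simp: split_beta)
  moreover have "h summable_on P"
  proof (rule abs_summable_summable, rule summable_on_comparison_test)
    show "(\<lambda>(N, a). real N powr (- Re s)) summable_on P"
      unfolding P_def using summable_on_powr_Sigma_atLeastLessThan[of "Re s"] assms by simp
    fix x assume "x \<in> P"
    then obtain N a where x: "x = (N, a)" "1 \<le> a" "a < N" unfolding P_def by auto
    have "norm (h x) = real a ^ c * real N powr (- Re s - real c)"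
      unfolding x h_def by (simp add: norm_mult norm_power norm_powr_real_powr)
    also have "\<dots> \<le> real N ^ c * real N powr (- Re s - real c)"
      using x by (intro mult_right_mono power_mono) auto
    also have "\<dots> = real N powr (- Re s)"
      using x by (simp flip: powr_realpow powr_add)
    finally show "norm (h x) \<le> (\<lambda>(N, a). real N powr (- Re s)) x"
      unfolding x by simp
  qed simp
  ultimately have "(h has_sum dz_series c s) P"
    using has_sum_infsum by simp
  then have "((\<lambda>N. \<Sum>a\<in>{1..<N}. h (N, a)) has_sum dz_series c s) UNIV"
    unfolding P_def by (rule has_sum_SigmaD) simp
  moreover have "(\<Sum>a\<in>{1..<N}. h (N, a)) = (\<Sum>a\<in>{1..<N}. of_nat a ^ c) * of_nat N powr (- s - of_nat c)"
    for N
    unfolding h_def sum_distrib_right by simp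
  ultimately show ?thesis
    by simp
qed

lemma has_sum_dz_series_combination:
  fixes d :: "nat \<Rightarrow> complex"
  assumes "Re s > 2"
  shows "((\<lambda>N. even_poly_grid_sum d m N * of_nat N powr (- s))
           has_sum (\<Sum>j\<le>m. d j * dz_series (2*j) s)) UNIV"
proof -
  have "((\<lambda>N. \<Sum>j\<le>m. d j * ((\<Sum>a\<in>{1..<N}. of_nat a ^ (2*j)) * of_nat N powr (- s - of_nat (2*j))))
          has_sum (\<Sum>j\<le>m. d j * dz_series (2*j) s)) UNIV"
    using assms by (intro has_sum_sum has_sum_cmult_right has_sum_dz_series_grouped) auto
  moreover have rescale: "(\<Sum>a\<in>{1..<N}. of_nat a ^ k) * of_nat N powr (- s - of_nat k)
      = (\<Sum>a\<in>{1..<N}. (of_nat a / of_nat N) ^ k) * of_nat N powr (- s)" for N k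
  proof (cases "N = 0")
    case False
    then have "of_nat N powr (- s - of_nat k) = of_nat N powr (- s) / of_nat N ^ k"
      by (simp add: powr_diff powr_nat')
    then show ?thesis
      by (simp add: power_divide flip: sum_divide_distrib)
  qed simp
  moreover have "(\<Sum>j\<le>m. d j * ((\<Sum>a\<in>{1..<N}. (of_nat a / of_nat N) ^ (2*j)) * of_nat N powr (- s)))
      = even_poly_grid_sum d m N * of_nat N powr (- s)" for N
    unfolding even_poly_grid_sum_def
    by (simp add: sum_distrib_left sum_distrib_right mult.assoc, rule sum.swap)
  ultimately show ?thesis
    by (simp only: rescale)
qed

lemma norm_dirichlet_tail_le:
  fixes a :: "nat \<Rightarrow> complex"
  assumes summable: "(\<lambda>k. norm (a k) * real k powr (- t0)) summable_on UNIV" and "t \<ge> t0"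
  shows "norm (\<Sum>\<^sub>\<infinity>k\<in>{n<..}. a k * of_nat k powr (- of_real t))
           \<le> real (n+1) powr (t0 - t) * (\<Sum>\<^sub>\<infinity>k. norm (a k) * real k powr (- t0))"
proof -
  define b where "b k = norm (a k) * real k powr (- t0)" for k
  have b_nonneg: "b k \<ge> 0" for k
    by (simp add: b_def)
  have norm_le: "norm (a k * of_nat k powr (- of_real t)) \<le> real (n+1) powr (t0 - t) * b k"
    if "k \<in> {n<..}" for k
  proof -
    have "real k powr (- t) = real k powr (t0 - t) * real k powr (- t0)"
      by (simp flip: powr_add)
    also have "real k powr (t0 - t) \<le> real (n+1) powr (t0 - t)"
      using that assms(2) by (intro powr_mono2') auto
    finally have "real k powr (- t) \<le> real (n+1) powr (t0 - t) * real k powr (- t0)"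
      by (simp add: mult_right_mono)
    then show ?thesis
      by (simp add: b_def norm_mult norm_powr_real_powr mult.left_commute mult_left_mono)
  qed
  have b_summable: "b summable_on {n<..}"
    using summable unfolding b_def by (rule summable_on_subset) simp
  have "(\<lambda>k. norm (a k * of_nat k powr (- of_real t))) summable_on {n<..}"
    by (rule summable_on_comparison_test[OF summable_on_cmult_right[OF b_summable]])
       (use norm_le in auto)
  then have "norm (\<Sum>\<^sub>\<infinity>k\<in>{n<..}. a k * of_nat k powr (- of_real t))
      \<le> (\<Sum>\<^sub>\<infinity>k\<in>{n<..}. norm (a k * of_nat k powr (- of_real t)))"
    by (rule norm_infsum_bound)
  also have "\<dots> \<le> (\<Sum>\<^sub>\<infinity>k\<in>{n<..}. real (n+1) powr (t0 - t) * b k)"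
    using \<open>(\<lambda>k. norm (a k * of_nat k powr (- of_real t))) summable_on {n<..}\<close>
      summable_on_cmult_right[OF b_summable] norm_le
    by (rule infsum_mono)
  also have "\<dots> \<le> real (n+1) powr (t0 - t) * (\<Sum>\<^sub>\<infinity>k. b k)"
    unfolding infsum_cmult_right'
    by (intro mult_left_mono infsum_mono_neutral b_summable) (use summable b_nonneg in \<open>auto simp: b_def\<close>)
  finally show ?thesis
    unfolding b_def .
qed

lemma norm_dirichlet_coeff_le:
  fixes a :: "nat \<Rightarrow> complex"
  assumes summable: "(\<lambda>k. norm (a k) * real k powr (- t0)) summable_on UNIV" and "t \<ge> t0"
    and zero: "((\<lambda>k. a k * of_nat k powr (- of_real t)) has_sum 0) UNIV"
    and below: "\<And>k. 0 < k \<Longrightarrow> k < n \<Longrightarrow> a k = 0" and "n > 0"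
  shows "norm (a n) \<le> (\<Sum>\<^sub>\<infinity>k. norm (a k) * real k powr (- t0)) * real (n+1) powr t0
                        * (real n / real (n+1)) powr t"
proof -
  define g where "g = (\<lambda>k. a k * of_nat k powr (- of_real t))"
  have "g summable_on {n<..}"
    using zero unfolding g_def by (intro summable_on_subset[OF has_sum_imp_summable]) auto
  then have "(g has_sum (g n + infsum g {n<..})) (insert n {n<..})"
    by (intro has_sum_insert) auto
  moreover have "g k = 0" if "k \<notin> insert n {n<..}" for k
    using that below[of k] by (cases "k = 0") (auto simp: g_def)
  then have "(g has_sum (g n + infsum g {n<..})) UNIV \<longleftrightarrow>
      (g has_sum (g n + infsum g {n<..})) (insert n {n<..})"
    by (intro has_sum_cong_neutral) auto
  ultimately have "(g has_sum (g n + infsum g {n<..})) UNIV"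
    by simp
  with zero have "g n = - infsum g {n<..}"
    unfolding g_def using has_sum_unique by (simp add: eq_neg_iff_add_eq_0)
  have "norm (a n) * real n powr (- t) = norm (g n)"
    by (simp add: g_def norm_mult norm_powr_real_powr)
  also have "\<dots> = norm (infsum g {n<..})"
    using \<open>g n = - infsum g {n<..}\<close> by simp
  also have "\<dots> \<le> real (n+1) powr (t0 - t) * (\<Sum>\<^sub>\<infinity>k. norm (a k) * real k powr (- t0))"
    unfolding g_def by (rule norm_dirichlet_tail_le[OF summable \<open>t \<ge> t0\<close>])
  finally have "norm (a n)
      \<le> real n powr t * real (n+1) powr (t0 - t) * (\<Sum>\<^sub>\<infinity>k. norm (a k) * real k powr (- t0))"
    using \<open>n > 0\<close> by (simp add: powr_minus field_simps)
  then show ?thesis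
    by (simp add: powr_diff powr_divide mult_ac)
qed

lemma dirichlet_series_coeff_eq_0:
  fixes a :: "nat \<Rightarrow> complex"
  assumes summable: "(\<lambda>k. norm (a k) * real k powr (- t0)) summable_on UNIV"
    and zeros: "\<And>T. \<exists>t\<ge>T. ((\<lambda>k. a k * of_nat k powr (- of_real t)) has_sum 0) UNIV"
    and "n > 0"
  shows "a n = 0"
  using \<open>n > 0\<close>
proof (induction n rule: less_induct)
  case (less n)
  define C where "C = (\<Sum>\<^sub>\<infinity>k. norm (a k) * real k powr (- t0)) * real (n+1) powr t0"
  define q where "q = real n / real (n+1)"
  have q: "0 < q" "q < 1"
    using less.prems by (auto simp: q_def)
  have "C \<ge> 0"
    unfolding C_def by (intro mult_nonneg_nonneg infsum_nonneg) auto
  show "a n = 0"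
  proof (rule ccontr)
    assume "a n \<noteq> 0"
    have "(\<lambda>k. C * q ^ k) \<longlonglongrightarrow> 0"
      using q by (intro tendsto_mult_right_zero LIMSEQ_power_zero) auto
    then have "eventually (\<lambda>k. C * q ^ k < norm (a n)) sequentially"
      using \<open>a n \<noteq> 0\<close> by (intro order_tendstoD(2)) auto
    then obtain k where k: "C * q ^ k < norm (a n)"
      by (auto simp: eventually_sequentially)
    obtain t where t: "t \<ge> max t0 (real k)"
      and zero: "((\<lambda>k. a k * of_nat k powr (- of_real t)) has_sum 0) UNIV"
      using zeros by blast
    have "norm (a n) \<le> C * q powr t"
      unfolding C_def q_def using t zero less
      by (intro norm_dirichlet_coeff_le[OF summable]) auto
    also have "\<dots> \<le> C * q powr real k"
      using q t \<open>C \<ge> 0\<close> by (intro mult_left_mono powr_mono') auto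
    also have "\<dots> = C * q ^ k"
      using q by (simp add: powr_realpow)
    finally show False
      using k by simp
  qed
qed

lemma eventually_cosparse_real_unbounded:
  fixes P :: "complex \<Rightarrow> bool"
  assumes "eventually P (cosparse UNIV)"
  shows "\<exists>t\<ge>T. P (of_real t)"
proof -
  define S where "S = complex_of_real ` {T..T+1}"
  have "compact S"
    unfolding S_def by (intro compact_continuous_image continuous_intros) simp
  moreover have "{z. \<not> P z} sparse_in S"
    using assms unfolding eventually_cosparse by (rule sparse_in_subset) simp
  ultimately have "finite (S \<inter> {z. \<not> P z})"
    by (intro sparse_in_compact_finite)
  moreover have "infinite S"
  proof
    assume "finite S"
    then have "finite {T..T+1}"
      unfolding S_def by (rule finite_imageD) (simp add: inj_on_def)
    then show False
      using infinite_Icc[of T "T+1"] by simp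
  qed
  ultimately have "infinite (S - {z. \<not> P z})"
    using Diff_infinite_finite[of "S \<inter> {z. \<not> P z}" S] by (simp add: Diff_Int)
  then obtain z where "z \<in> S" "P z"
    using infinite_imp_nonempty by blast
  then show ?thesis
    unfolding S_def by auto
qed

lemma dz_comb_diff:
  "dz_comb m coef F s - dz_comb m coef' F s
     = (\<Sum>j\<le>m. (if j = 0 then (coef 0 - coef' 0) / 2 else coef (2*j) - coef' (2*j)) * F (2*j) s)"
proof -
  have "{..m} = insert 0 {1..m}" by auto
  then show ?thesis
    unfolding dz_comb_def by (simp add: sum_subtractf algebra_simps diff_divide_distrib)
qed

lemma dz_combination_dirichlet_zeros:
  assumes "\<And>j. j \<le> m \<Longrightarrow> is_dz_continuation (2*j) (F (2*j))"
    and "\<forall>\<^sub>F s in cosparse UNIV. (\<Sum>j\<le>m. d j * F (2*j) s) = 0"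
  shows "\<exists>t\<ge>T. ((\<lambda>N. even_poly_grid_sum d m N * of_nat N powr (- of_real t)) has_sum 0) UNIV"
proof -
  obtain t where t: "t \<ge> max T 3" and zero: "(\<Sum>j\<le>m. d j * F (2*j) (of_real t)) = 0"
    using eventually_cosparse_real_unbounded[OF assms(2)] by blast
  have "F (2*j) (of_real t) = dz_series (2*j) (of_real t)" if "j \<le> m" for j
    using assms(1)[OF that] t by (simp add: is_dz_continuation_def)
  then have "((\<lambda>N. even_poly_grid_sum d m N * of_nat N powr (- of_real t)) has_sum 0) UNIV"
    using has_sum_dz_series_combination[of "of_real t" d m] t zero by simp
  then show ?thesis
    using t by auto
qed

theorem corollary5p3:
  fixes m :: nat and F :: "nat \<Rightarrow> complex \<Rightarrow> complex"
    and coef coef' :: "nat \<Rightarrow> complex"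
  assumes "\<And>k. k \<le> 2*m+1 \<Longrightarrow> is_dz_continuation k (F k)"
    and "\<forall>\<^sub>F s in cosparse UNIV. dz_comb m coef F s = 0"
    and "\<forall>\<^sub>F s in cosparse UNIV. dz_comb m coef' F s = 0"
  shows "\<forall>j\<le>m. coef (2*j) = coef' (2*j)"
proof -
  define d where "d j = (if j = 0 then (coef 0 - coef' 0) / 2 else coef (2*j) - coef' (2*j))" for j
  have "\<forall>\<^sub>F s in cosparse UNIV. (\<Sum>j\<le>m. d j * F (2*j) s) = 0"
    using assms(2,3) by eventually_elim (simp add: d_def flip: dz_comb_diff)
  then have zeros: "\<exists>t\<ge>T. ((\<lambda>N. even_poly_grid_sum d m N * of_nat N powr (- of_real t)) has_sum 0) UNIV"
    for T
    using assms(1) by (intro dz_combination_dirichlet_zeros) auto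
  have "even_poly_grid_sum d m N = 0" if "N > 0" for N
    using summable_on_norm_even_poly_grid_sum_powr zeros that by (rule dirichlet_series_coeff_eq_0)
  then have "\<forall>j\<le>m. d j = 0"
    by (intro even_poly_grid_sum_eq_0_imp_coeffs_eq_0) simp
  moreover have "d j = 0 \<longleftrightarrow> coef (2*j) = coef' (2*j)" for j
    by (simp add: d_def)
  ultimately show ?thesis
    by blast
qed

end
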